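(* Consider the problem of minimizing $\pmb{c}^T\pmb{x}$ subject to $\pmb{x}\in\mathbb{X}$ and, for each $r\in[m]$, the constraint $$\max_{\pmb{p}\in\mathcal{P}(\pi_r)}\sum_{i\in[K_r]}p_i\,(\pmb{a}^{r}_i)^T\pmb{x}\le b_r,$$ where for each $r$, $\pmb{a}^r_1,\dots,\pmb{a}^r_{K_r}\in\mathbb{R}^n$ are scenarios and $\pi_r:[K_r]\to[0,1]$ is a possibility distribution with $\pi_r(1)\ge\dots\ge\pi_r(K_r)$, $\pi_r(1)=1$. If $\mathbb{X}\subseteq\mathbb{R}^n$ is a polyhedron described by a finite system of linear constraints, then this problem is equivalent to a linear programming problem (in the variables $\pmb{x}$ together with auxiliary variables $\beta^r\in\mathbb{R}$, $\alpha^r_j\ge 0$), whose size is polynomial in $n$, $m$, $\sum_r K_r$ and the size of the description of $\mathbb{X}$.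
   Context: $\pmb{c}\in\mathbb{R}^n$, $\pmb{b}\in\mathbb{R}^m$. For a possibility distribution $\pi:[K]\to[0,1]$, $\mathcal{P}(\pi)$ denotes the set of all $\pmb{p}\in\mathbb{R}^K$ with $p_i\ge0$, $\sum_{i\in[K]}p_i=1$, and $\sum_{i\in A}p_i\ge 1-\max_{i\notin A}\pi(i)$ for every nonempty $A\subsetneq[K]$ (the set of probability distributions on the scenario indices consistent with $\pi$, i.e. dominating the necessity measure induced by $\pi$). *)

theory Defs
  imports Complex_Main
begin

text \<open>Vectors of R^n are represented as functions nat => real, only the
components with index < n being relevant. Indices are 0-based:
[K] is rendered as {..<K}.\<close>

definition dotn :: "nat \<Rightarrow> (nat \<Rightarrow> real) \<Rightarrow> (nat \<Rightarrow> real) \<Rightarrow> real" where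
  "dotn n u v = (\<Sum>i<n. u i * v i)"

text \<open>The set P(pi) of probability distributions on [K] dominating the
necessity measure induced by the possibility distribution pi.\<close>
definition Pposs :: "nat \<Rightarrow> (nat \<Rightarrow> real) \<Rightarrow> (nat \<Rightarrow> real) set" where
  "Pposs K \<pi> = {p. (\<forall>i<K. 0 \<le> p i) \<and> (\<Sum>i<K. p i) = 1 \<and>
     (\<forall>A. A \<noteq> {} \<and> A \<subset> {..<K} \<longrightarrow>
          (\<Sum>i\<in>A. p i) \<ge> 1 - Max (\<pi> ` ({..<K} - A)))}"

definition ordered_possdist :: "nat \<Rightarrow> (nat \<Rightarrow> real) \<Rightarrow> bool" where
  "ordered_possdist K \<pi> \<longleftrightarrow> 1 \<le> K \<and> (\<forall>i<K. 0 \<le> \<pi> i \<and> \<pi> i \<le> 1) \<and> \<pi> 0 = 1 \<and>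
     (\<forall>i j. i \<le> j \<longrightarrow> j < K \<longrightarrow> \<pi> j \<le> \<pi> i)"

end

theory Submission
  imports Defs
begin

text \<open>Let \<open>\<pi>\<close> be non-increasing with \<open>\<pi> 0 = 1\<close> and put \<open>w k = \<pi> k - \<pi> (k + 1)\<close>,
with \<open>\<pi> K = 0\<close>. The worst-case expectation of a cost vector \<open>c\<close> over \<open>Pposs K \<pi>\<close>
is \<open>\<Sum>k<K. w k * max {c i | i \<le> k}\<close>. Indeed, the tail sums of any \<open>p \<in> Pposs K \<pi>\<close>
are bounded by those of \<open>w\<close>, so by summation by parts \<open>\<Sum>i<K. p i * c i\<close> is at most
\<open>\<Sum>k<K. w k * s k\<close> for every nondecreasing majorant \<open>s\<close> of \<open>c\<close>; and moving each
weight \<open>w k\<close> to a maximiser of \<open>c\<close> on \<open>{..k}\<close> gives a member of \<open>Pposs K \<pi>\<close>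
attaining the bound. Hence a robust constraint holds iff some nondecreasing
\<open>s \<ge> A x\<close> satisfies \<open>\<Sum>k<K. w k * s k \<le> b\<close>: \<open>2K + 1\<close> linear inequalities in
\<open>K\<close> auxiliary variables. Stacking these systems with the description of the
polyhedron gives a linear program of linear size.\<close>

lemma sum_mult_eq_tail_sums:
  fixes p f :: "nat \<Rightarrow> 'a::comm_ring_1"
  shows "(\<Sum>i<K. p i * f i) =
    (\<Sum>i<K. p i) * f 0 + (\<Sum>j<K. (\<Sum>i\<in>{Suc j..<K}. p i) * (f (Suc j) - f j))"
proof (induction K)
  case 0
  show ?case by simp
next
  case (Suc K)
  have tail: "(\<Sum>i\<in>{Suc j..<Suc K}. p i) = (\<Sum>i\<in>{Suc j..<K}. p i) + p K" if "j < K" for j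
    using that by simp
  have "(\<Sum>j<Suc K. (\<Sum>i\<in>{Suc j..<Suc K}. p i) * (f (Suc j) - f j))
      = (\<Sum>j<K. (\<Sum>i\<in>{Suc j..<K}. p i) * (f (Suc j) - f j)) + p K * (f K - f 0)"
    by (simp add: tail distrib_right sum.distrib sum_distrib_left[symmetric] sum_lessThan_telescope)
  then show ?case
    using Suc.IH by (simp add: algebra_simps)
qed

lemma all_lessThan_add: "(\<forall>j<m + (n::nat). P j) \<longleftrightarrow> (\<forall>j<m. P j) \<and> (\<forall>j<n. P (m + j))"
proof -
  have "\<exists>i<n. j = m + i" if "j < m + n" "\<not> j < m" for j
    using that by (intro exI[of _ "j - m"]) auto
  then show ?thesis by auto
qed

lemma sum_lessThan_add: "(\<Sum>k<m + (n::nat). g k) = (\<Sum>k<m. g k) + (\<Sum>k<n. g (m + k))"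
  by (induction n) (simp_all add: add_ac)

lemma sum_lessThan_delta_mult:
  fixes i K :: nat and c :: "'a::semiring_0"
  shows "(\<Sum>k<K. (if k = i then c else 0) * y k) = (if i < K then c * y i else 0)"
proof -
  have "(\<Sum>k<K. (if k = i then c else 0) * y k) = (\<Sum>k<K. if k = i then c * y k else 0)"
    by (intro sum.cong) simp_all
  then show ?thesis
    by simp
qed

text \<open>\<open>\<pi>\<close> extended by \<open>0\<close> beyond the \<open>K\<close> scenarios, so that the weights
\<open>\<pi> k - \<pi> (k + 1)\<close> telescope and sum to \<open>\<pi> 0 = 1\<close>.\<close>

definition poss_ext :: "nat \<Rightarrow> (nat \<Rightarrow> real) \<Rightarrow> nat \<Rightarrow> real" where
  "poss_ext K \<pi> k = (if k < K then \<pi> k else 0)"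

definition poss_weight :: "nat \<Rightarrow> (nat \<Rightarrow> real) \<Rightarrow> nat \<Rightarrow> real" where
  "poss_weight K \<pi> k = poss_ext K \<pi> k - poss_ext K \<pi> (Suc k)"

lemma poss_weight_nonneg: "ordered_possdist K \<pi> \<Longrightarrow> 0 \<le> poss_weight K \<pi> k"
  unfolding ordered_possdist_def poss_weight_def poss_ext_def by auto

lemma sum_poss_weight_lessThan:
  "(\<Sum>k<j. poss_weight K \<pi> k) = poss_ext K \<pi> 0 - poss_ext K \<pi> j"
  unfolding poss_weight_def by (rule sum_lessThan_telescope')

lemma sum_poss_weight_atLeastLessThan:
  assumes "j \<le> K"
  shows "(\<Sum>k\<in>{j..<K}. poss_weight K \<pi> k) = poss_ext K \<pi> j"
proof -
  have "(\<Sum>k\<in>{j..<K}. poss_weight K \<pi> k) = - (\<Sum>k\<in>{j..<K}. poss_ext K \<pi> (Suc k) - poss_ext K \<pi> k)"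
    by (simp add: poss_weight_def sum_negf[symmetric])
  also have "\<dots> = poss_ext K \<pi> j"
    using sum_Suc_diff'[OF assms, of "poss_ext K \<pi>"] by (simp add: poss_ext_def)
  finally show ?thesis .
qed

lemma sum_poss_weight: "ordered_possdist K \<pi> \<Longrightarrow> (\<Sum>k<K. poss_weight K \<pi> k) = 1"
  by (simp add: sum_poss_weight_lessThan ordered_possdist_def poss_ext_def)

lemma Pposs_tail_le:
  assumes o: "ordered_possdist K \<pi>" and p: "p \<in> Pposs K \<pi>" and j: "0 < j" "j < K"
  shows "(\<Sum>i\<in>{j..<K}. p i) \<le> \<pi> j"
proof -
  have dominates: "\<forall>A. A \<noteq> {} \<and> A \<subset> {..<K} \<longrightarrow> 1 - Max (\<pi> ` ({..<K} - A)) \<le> (\<Sum>i\<in>A. p i)"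
    using p unfolding Pposs_def by simp
  have "1 - Max (\<pi> ` ({..<K} - {..<j})) \<le> (\<Sum>i<j. p i)"
    by (rule dominates[rule_format]) (use j in auto)
  moreover have "{..<K} - {..<j} = {j..<K}" by auto
  moreover have "Max (\<pi> ` {j..<K}) = \<pi> j"
    using o j unfolding ordered_possdist_def by (intro Max_eqI) auto
  moreover have "(\<Sum>i<j. p i) + (\<Sum>i\<in>{j..<K}. p i) = 1"
    using p j sum.atLeastLessThan_concat[of 0 j K p] unfolding Pposs_def by (simp add: atLeast0LessThan)
  ultimately show ?thesis by simp
qed

lemma Pposs_expectation_le:
  assumes o: "ordered_possdist K \<pi>" and p: "p \<in> Pposs K \<pi>"
    and cs: "\<forall>i<K. c i \<le> s i" and mono: "\<forall>i. Suc i < K \<longrightarrow> s i \<le> s (Suc i)"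
  shows "(\<Sum>i<K. p i * c i) \<le> (\<Sum>k<K. poss_weight K \<pi> k * s k)"
proof -
  let ?w = "poss_weight K \<pi>"
  have p_nonneg: "\<forall>i<K. 0 \<le> p i" and p_sum: "(\<Sum>i<K. p i) = 1"
    using p unfolding Pposs_def by auto
  have tails: "(\<Sum>i\<in>{Suc j..<K}. p i) * (s (Suc j) - s j)
      \<le> (\<Sum>i\<in>{Suc j..<K}. ?w i) * (s (Suc j) - s j)" if "j < K" for j
  proof (cases "Suc j < K")
    case True
    then show ?thesis
      using Pposs_tail_le[OF o p, of "Suc j"] mono sum_poss_weight_atLeastLessThan[of "Suc j" K \<pi>]
      by (intro mult_right_mono) (auto simp: poss_ext_def)
  next
    case False
    with that show ?thesis by simp
  qed
  have "(\<Sum>i<K. p i * c i) \<le> (\<Sum>i<K. p i * s i)"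
    using p_nonneg cs by (intro sum_mono mult_left_mono) auto
  also have "\<dots> = s 0 + (\<Sum>j<K. (\<Sum>i\<in>{Suc j..<K}. p i) * (s (Suc j) - s j))"
    by (subst sum_mult_eq_tail_sums) (simp add: p_sum)
  also have "\<dots> \<le> s 0 + (\<Sum>j<K. (\<Sum>i\<in>{Suc j..<K}. ?w i) * (s (Suc j) - s j))"
    using tails by (intro add_left_mono sum_mono) auto
  also have "\<dots> = (\<Sum>k<K. ?w k * s k)"
    by (subst (2) sum_mult_eq_tail_sums) (simp add: sum_poss_weight[OF o])
  finally show ?thesis .
qed

definition push_weights :: "nat \<Rightarrow> (nat \<Rightarrow> nat) \<Rightarrow> (nat \<Rightarrow> real) \<Rightarrow> nat \<Rightarrow> real" where
  "push_weights K \<sigma> w i = (\<Sum>k<K. if \<sigma> k = i then w k else 0)"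

lemma sum_push_weights_mult:
  assumes "finite A"
  shows "(\<Sum>i\<in>A. push_weights K \<sigma> w i * c i) = (\<Sum>k<K. if \<sigma> k \<in> A then w k * c (\<sigma> k) else 0)"
proof -
  have "(\<Sum>i\<in>A. push_weights K \<sigma> w i * c i) = (\<Sum>k<K. \<Sum>i\<in>A. if \<sigma> k = i then w k * c i else 0)"
    unfolding push_weights_def sum_distrib_right by (subst sum.swap) (auto intro!: sum.cong)
  also have "\<dots> = (\<Sum>k<K. if \<sigma> k \<in> A then w k * c (\<sigma> k) else 0)"
    using assms by (simp add: sum.delta)
  finally show ?thesis .
qed

lemma sum_push_weights:
  "finite A \<Longrightarrow> (\<Sum>i\<in>A. push_weights K \<sigma> w i) = (\<Sum>k<K. if \<sigma> k \<in> A then w k else 0)"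
  using sum_push_weights_mult[of A K \<sigma> w "\<lambda>_. 1"] by (simp only: mult_1_right)

text \<open>Moving each weight \<open>w k\<close> to a scenario \<open>\<sigma> k \<le> k\<close> only makes the initial
segments heavier, and these are what the necessity constraints bound from below.\<close>

lemma push_poss_weights_in_Pposs:
  assumes o: "ordered_possdist K \<pi>" and \<sigma>: "\<forall>k<K. \<sigma> k \<le> k"
  shows "push_weights K \<sigma> (poss_weight K \<pi>) \<in> Pposs K \<pi>"
proof -
  let ?w = "poss_weight K \<pi>" and ?p = "push_weights K \<sigma> (poss_weight K \<pi>)"
  have w_nonneg: "0 \<le> ?w k" for k
    using poss_weight_nonneg[OF o] .
  have "(\<Sum>i<K. ?p i) = (\<Sum>k<K. ?w k)"
    using \<sigma> by (auto simp: sum_push_weights intro!: sum.cong)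
  then have total: "(\<Sum>i<K. ?p i) = 1"
    using sum_poss_weight[OF o] by simp
  have dominates: "1 - Max (\<pi> ` ({..<K} - A)) \<le> (\<Sum>i\<in>A. ?p i)"
    if A: "A \<noteq> {}" "A \<subset> {..<K}" for A
  proof -
    define k0 where "k0 = Min ({..<K} - A)"
    have "{..<K} - A \<noteq> {}"
      using A(2) by blast
    then have k0: "k0 \<in> {..<K} - A" "\<And>k. k \<in> {..<K} - A \<Longrightarrow> k0 \<le> k"
      unfolding k0_def by (metis Min_in finite_Diff finite_lessThan) simp
    have "Max (\<pi> ` ({..<K} - A)) = \<pi> k0"
      using o k0 unfolding ordered_possdist_def by (intro Max_eqI) auto
    then have "1 - Max (\<pi> ` ({..<K} - A)) = (\<Sum>k<k0. ?w k)"
      using o k0(1) by (simp add: sum_poss_weight_lessThan poss_ext_def ordered_possdist_def)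
    also have "\<dots> = (\<Sum>k<K. if k < k0 then ?w k else 0)"
    proof -
      have "{k \<in> {..<K}. k < k0} = {..<k0}"
        using k0(1) by auto
      then show ?thesis
        by (metis finite_lessThan sum.inter_filter)
    qed
    also have "\<dots> \<le> (\<Sum>k<K. if \<sigma> k \<in> A then ?w k else 0)"
    proof (rule sum_mono)
      fix k assume "k \<in> {..<K}"
      then have "k < k0 \<Longrightarrow> \<sigma> k \<in> A"
        using \<sigma> k0 by (meson Diff_iff le_less_trans lessThan_iff not_le)
      then show "(if k < k0 then ?w k else 0) \<le> (if \<sigma> k \<in> A then ?w k else 0)"
        using w_nonneg by auto
    qed
    also have "\<dots> = (\<Sum>i\<in>A. ?p i)"
      using A(2) by (simp add: sum_push_weights finite_subset[of A "{..<K}"])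
    finally show ?thesis .
  qed
  show ?thesis
    unfolding Pposs_def using w_nonneg total dominates by (auto intro: sum_nonneg simp: push_weights_def)
qed

definition running_max :: "(nat \<Rightarrow> real) \<Rightarrow> nat \<Rightarrow> real" where
  "running_max c k = Max (c ` {..k})"

lemma running_max_ge: "c k \<le> running_max c k"
  unfolding running_max_def by simp

lemma running_max_Suc_ge: "running_max c k \<le> running_max c (Suc k)"
  unfolding running_max_def by (rule Max_mono) auto

lemma running_max_attained: "\<exists>i\<le>k. c i = running_max c k"
proof -
  have "running_max c k \<in> c ` {..k}"
    unfolding running_max_def by (rule Max_in) auto
  then show ?thesis by auto
qed

lemma Pposs_attains_running_max:
  assumes o: "ordered_possdist K \<pi>"
  shows "\<exists>p\<in>Pposs K \<pi>. (\<Sum>i<K. p i * c i) = (\<Sum>k<K. poss_weight K \<pi> k * running_max c k)"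
proof -
  obtain \<sigma> where \<sigma>: "\<forall>k. \<sigma> k \<le> k \<and> c (\<sigma> k) = running_max c k"
    using choice[of "\<lambda>k i. i \<le> k \<and> c i = running_max c k"] running_max_attained by blast
  let ?p = "push_weights K \<sigma> (poss_weight K \<pi>)"
  have "?p \<in> Pposs K \<pi>"
    using \<sigma> by (intro push_poss_weights_in_Pposs[OF o]) auto
  moreover have "(\<Sum>i<K. ?p i * c i) = (\<Sum>k<K. poss_weight K \<pi> k * running_max c k)"
  proof -
    have "\<sigma> k < K" if "k < K" for k
      using \<sigma> that le_less_trans by blast
    then show ?thesis
      using \<sigma> by (simp add: sum_push_weights_mult)
  qed
  ultimately show ?thesis by blast
qed

theorem SUP_Pposs_eq:
  assumes o: "ordered_possdist K \<pi>"
  shows "(SUP p\<in>Pposs K \<pi>. \<Sum>i<K. p i * c i) = (\<Sum>k<K. poss_weight K \<pi> k * running_max c k)"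
proof -
  let ?v = "\<Sum>k<K. poss_weight K \<pi> k * running_max c k"
  obtain p where p: "p \<in> Pposs K \<pi>" "(\<Sum>i<K. p i * c i) = ?v"
    using Pposs_attains_running_max[OF o] by blast
  have attained: "?v \<in> (\<lambda>p. \<Sum>i<K. p i * c i) ` Pposs K \<pi>"
    using p by (intro image_eqI[where f = "\<lambda>p. \<Sum>i<K. p i * c i"]) simp_all
  have upper: "(\<Sum>i<K. q i * c i) \<le> ?v" if "q \<in> Pposs K \<pi>" for q
    by (rule Pposs_expectation_le[OF o that]) (simp_all add: running_max_ge running_max_Suc_ge)
  show ?thesis
    by (rule cSup_eq_maximum[OF attained]) (auto intro: upper)
qed

lemma SUP_Pposs_le_iff:
  assumes o: "ordered_possdist K \<pi>"
  shows "(SUP p\<in>Pposs K \<pi>. \<Sum>i<K. p i * c i) \<le> b \<longleftrightarrow>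
    (\<exists>s. (\<forall>i<K. c i \<le> s i) \<and> (\<forall>i. Suc i < K \<longrightarrow> s i \<le> s (Suc i)) \<and>
         (\<Sum>k<K. poss_weight K \<pi> k * s k) \<le> b)"
    (is "_ \<longleftrightarrow> (\<exists>s. ?majorant s \<and> ?mono s \<and> ?bound s)")
proof
  assume "(SUP p\<in>Pposs K \<pi>. \<Sum>i<K. p i * c i) \<le> b"
  then have "?bound (running_max c)"
    by (simp add: SUP_Pposs_eq[OF o])
  moreover have "?majorant (running_max c)" "?mono (running_max c)"
    by (simp_all add: running_max_ge running_max_Suc_ge)
  ultimately show "\<exists>s. ?majorant s \<and> ?mono s \<and> ?bound s"
    by blast
next
  assume "\<exists>s. ?majorant s \<and> ?mono s \<and> ?bound s"
  then obtain s where s: "?majorant s" "?mono s" "?bound s"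
    by blast
  obtain p where p: "p \<in> Pposs K \<pi>"
    "(\<Sum>i<K. p i * c i) = (\<Sum>k<K. poss_weight K \<pi> k * running_max c k)"
    using Pposs_attains_running_max[OF o] by blast
  have "(SUP p\<in>Pposs K \<pi>. \<Sum>i<K. p i * c i) = (\<Sum>i<K. p i * c i)"
    using p(2) by (simp add: SUP_Pposs_eq[OF o])
  also have "\<dots> \<le> (\<Sum>k<K. poss_weight K \<pi> k * s k)"
    by (rule Pposs_expectation_le[OF o p(1) s(1,2)])
  also have "\<dots> \<le> b"
    by (rule s(3))
  finally show "(SUP p\<in>Pposs K \<pi>. \<Sum>i<K. p i * c i) \<le> b" .
qed

definition ineq_system ::
    "nat \<Rightarrow> nat \<Rightarrow> nat \<Rightarrow> ((nat \<Rightarrow> real) \<Rightarrow> (nat \<Rightarrow> real) \<Rightarrow> bool) \<Rightarrow> bool" where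
  "ineq_system n N M P \<longleftrightarrow> (\<exists>(D::nat \<Rightarrow> nat \<Rightarrow> real) (E::nat \<Rightarrow> nat \<Rightarrow> real) (f::nat \<Rightarrow> real).
     \<forall>x y. P x y \<longleftrightarrow> (\<forall>j<M. dotn n (D j) x + (\<Sum>k<N. E j k * y k) \<le> f j))"

definition lp_representable :: "nat \<Rightarrow> nat \<Rightarrow> nat \<Rightarrow> ((nat \<Rightarrow> real) \<Rightarrow> bool) \<Rightarrow> bool" where
  "lp_representable n N M S \<longleftrightarrow> (\<exists>P. ineq_system n N M P \<and> (\<forall>x. S x \<longleftrightarrow> (\<exists>y. P x y)))"

lemma lp_representable_iff:
  "lp_representable n N M S \<longleftrightarrow>
    (\<exists>(D::nat \<Rightarrow> nat \<Rightarrow> real) (E::nat \<Rightarrow> nat \<Rightarrow> real) (f::nat \<Rightarrow> real).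
       \<forall>x. S x \<longleftrightarrow> (\<exists>y::nat \<Rightarrow> real. \<forall>j<M. dotn n (D j) x + (\<Sum>k<N. E j k * y k) \<le> f j))"
  (is "_ \<longleftrightarrow> (\<exists>D E f. \<forall>x. S x \<longleftrightarrow> (\<exists>y. ?rows D E f x y))")
proof
  assume "lp_representable n N M S"
  then obtain P where P: "ineq_system n N M P" "\<forall>x. S x \<longleftrightarrow> (\<exists>y. P x y)"
    unfolding lp_representable_def by blast
  from P(1) obtain D E f where "\<forall>x y. P x y \<longleftrightarrow> ?rows D E f x y"
    unfolding ineq_system_def by blast
  with P(2) show "\<exists>D E f. \<forall>x. S x \<longleftrightarrow> (\<exists>y. ?rows D E f x y)"
    by (intro exI[of _ D] exI[of _ E] exI[of _ f]) simp
next
  assume "\<exists>D E f. \<forall>x. S x \<longleftrightarrow> (\<exists>y. ?rows D E f x y)"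
  then obtain D E f where "\<forall>x. S x \<longleftrightarrow> (\<exists>y. ?rows D E f x y)"
    by blast
  moreover have "ineq_system n N M (?rows D E f)"
    unfolding ineq_system_def by blast
  ultimately show "lp_representable n N M S"
    unfolding lp_representable_def by blast
qed

lemma ineq_system_cong:
  assumes "ineq_system n N M P" and "\<forall>k<N. y k = y' k"
  shows "P x y \<longleftrightarrow> P x y'"
proof -
  obtain D E f where "\<forall>x y. P x y \<longleftrightarrow> (\<forall>j<M. dotn n (D j) x + (\<Sum>k<N. E j k * y k) \<le> f j)"
    using assms(1) unfolding ineq_system_def by blast
  moreover have "(\<Sum>k<N. E j k * y k) = (\<Sum>k<N. E j k * y' k)" for j
    using assms(2) by (intro sum.cong) simp_all
  ultimately show ?thesis by simp
qed

lemma ineq_system_conj: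
  assumes "ineq_system n N M1 P" and "ineq_system n N M2 Q"
  shows "ineq_system n N (M1 + M2) (\<lambda>x y. P x y \<and> Q x y)"
proof -
  obtain D1 E1 f1 where 1: "\<forall>x y. P x y \<longleftrightarrow> (\<forall>j<M1. dotn n (D1 j) x + (\<Sum>k<N. E1 j k * y k) \<le> f1 j)"
    using assms(1) unfolding ineq_system_def by blast
  obtain D2 E2 f2 where 2: "\<forall>x y. Q x y \<longleftrightarrow> (\<forall>j<M2. dotn n (D2 j) x + (\<Sum>k<N. E2 j k * y k) \<le> f2 j)"
    using assms(2) unfolding ineq_system_def by blast
  let ?D = "\<lambda>j. if j < M1 then D1 j else D2 (j - M1)"
  let ?E = "\<lambda>j. if j < M1 then E1 j else E2 (j - M1)"
  let ?f = "\<lambda>j. if j < M1 then f1 j else f2 (j - M1)"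
  show ?thesis
    unfolding ineq_system_def
    by (rule exI[of _ ?D], rule exI[of _ ?E], rule exI[of _ ?f]) (simp add: all_lessThan_add 1 2)
qed

lemma ineq_system_more_vars:
  assumes "ineq_system n N M P" and "N \<le> N'"
  shows "ineq_system n N' M P"
proof -
  obtain D E f where DEf: "\<forall>x y. P x y \<longleftrightarrow> (\<forall>j<M. dotn n (D j) x + (\<Sum>k<N. E j k * y k) \<le> f j)"
    using assms(1) unfolding ineq_system_def by blast
  have "(\<Sum>k<N'. (if k < N then E j k else 0) * y k) = (\<Sum>k<N. E j k * y k)" for j and y :: "nat \<Rightarrow> real"
  proof -
    have "{k \<in> {..<N'}. k < N} = {..<N}"
      using assms(2) by auto
    then have "(\<Sum>k<N'. if k < N then E j k * y k else 0) = (\<Sum>k<N. E j k * y k)"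
      by (metis finite_lessThan sum.inter_filter)
    moreover have "(\<Sum>k<N'. (if k < N then E j k else 0) * y k) = (\<Sum>k<N'. if k < N then E j k * y k else 0)"
      by (intro sum.cong) simp_all
    ultimately show ?thesis
      by simp
  qed
  then show ?thesis
    unfolding ineq_system_def using DEf
    by (intro exI[of _ D] exI[of _ "\<lambda>j k. if k < N then E j k else 0"] exI[of _ f]) simp
qed

lemma ineq_system_shift_vars:
  assumes "ineq_system n N M P"
  shows "ineq_system n (N' + N) M (\<lambda>x y. P x (\<lambda>k. y (N' + k)))"
proof -
  obtain D E f where DEf: "\<forall>x y. P x y \<longleftrightarrow> (\<forall>j<M. dotn n (D j) x + (\<Sum>k<N. E j k * y k) \<le> f j)"
    using assms unfolding ineq_system_def by blast
  have "(\<Sum>k<N' + N. (if k < N' then 0 else E j (k - N')) * y k) = (\<Sum>k<N. E j k * y (N' + k))"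
    for j and y :: "nat \<Rightarrow> real"
    by (simp add: sum_lessThan_add)
  then show ?thesis
    unfolding ineq_system_def using DEf
    by (intro exI[of _ D] exI[of _ "\<lambda>j k. if k < N' then 0 else E j (k - N')"] exI[of _ f]) simp
qed

lemma lp_representable_conj:
  assumes "lp_representable n N1 M1 S" and "lp_representable n N2 M2 T"
  shows "lp_representable n (N1 + N2) (M1 + M2) (\<lambda>x. S x \<and> T x)"
proof -
  obtain P where P: "ineq_system n N1 M1 P" "\<forall>x. S x \<longleftrightarrow> (\<exists>y. P x y)"
    using assms(1) unfolding lp_representable_def by blast
  obtain Q where Q: "ineq_system n N2 M2 Q" "\<forall>x. T x \<longleftrightarrow> (\<exists>y. Q x y)"
    using assms(2) unfolding lp_representable_def by blast
  let ?R = "\<lambda>x y. P x y \<and> Q x (\<lambda>k. y (N1 + k))"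
  have "ineq_system n (N1 + N2) (M1 + M2) ?R"
    by (intro ineq_system_conj ineq_system_more_vars[OF P(1)] ineq_system_shift_vars[OF Q(1)]) simp
  moreover have "S x \<and> T x \<longleftrightarrow> (\<exists>y. ?R x y)" for x
  proof
    assume "S x \<and> T x"
    then obtain y1 y2 where "P x y1" "Q x y2"
      using P(2) Q(2) by blast
    moreover define y where "y k = (if k < N1 then y1 k else y2 (k - N1))" for k
    moreover have "P x y \<longleftrightarrow> P x y1"
      by (rule ineq_system_cong[OF P(1)]) (simp add: y_def)
    moreover have "(\<lambda>k. y (N1 + k)) = y2"
      by (simp add: y_def)
    ultimately show "\<exists>y. ?R x y"
      by auto
  next
    assume "\<exists>y. ?R x y"
    then show "S x \<and> T x"
      using P(2) Q(2) by blast
  qed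
  ultimately show ?thesis
    unfolding lp_representable_def by blast
qed

lemma lp_representable_all:
  fixes N M :: "nat \<Rightarrow> nat"
  assumes "\<forall>r<m. lp_representable n (N r) (M r) (S r)"
  shows "lp_representable n (\<Sum>r<m. N r) (\<Sum>r<m. M r) (\<lambda>x. \<forall>r<m. S r x)"
  using assms
proof (induction m)
  case 0
  have "ineq_system n 0 0 (\<lambda>_ _. True)"
    unfolding ineq_system_def by simp
  then show ?case
    unfolding lp_representable_def by auto
next
  case (Suc m)
  then have "lp_representable n ((\<Sum>r<m. N r) + N m) ((\<Sum>r<m. M r) + M m)
      (\<lambda>x. (\<forall>r<m. S r x) \<and> S m x)"
    by (intro lp_representable_conj) auto
  moreover have "(\<lambda>x. \<forall>r<Suc m. S r x) = (\<lambda>x. (\<forall>r<m. S r x) \<and> S m x)"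
    by (auto simp: less_Suc_eq)
  ultimately show ?case
    by simp
qed

lemma lp_representable_linear: "lp_representable n 0 q (\<lambda>x. \<forall>j<q. dotn n (G j) x \<le> h j)"
  unfolding lp_representable_iff by (intro exI[of _ G] exI[of _ "\<lambda>_ _. 0"] exI[of _ h]) simp

lemma ineq_system_majorant: "ineq_system n K K (\<lambda>x s. \<forall>i<K. dotn n (a i) x \<le> s i)"
  unfolding ineq_system_def
  by (intro exI[of _ a] exI[of _ "\<lambda>i k. if k = i then -1 else 0"] exI[of _ "\<lambda>_. 0"])
    (simp add: sum_lessThan_delta_mult)

lemma ineq_system_nondecreasing:
  "ineq_system n K K (\<lambda>x s. \<forall>i. Suc i < K \<longrightarrow> s i \<le> s (Suc i))"
proof -
  define E :: "nat \<Rightarrow> nat \<Rightarrow> real" where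
    "E i k = (if Suc i < K then (if k = i then 1 else 0) - (if k = Suc i then 1 else 0) else 0)" for i k
  have "(\<Sum>k<K. E i k * s k) = (if Suc i < K then s i - s (Suc i) else 0)" for i and s :: "nat \<Rightarrow> real"
    by (simp add: E_def left_diff_distrib sum_subtractf sum_lessThan_delta_mult)
  then have "(\<forall>i. Suc i < K \<longrightarrow> s i \<le> s (Suc i)) \<longleftrightarrow> (\<forall>i<K. dotn n (\<lambda>_. 0) x + (\<Sum>k<K. E i k * s k) \<le> 0)"
    for x s :: "nat \<Rightarrow> real"
    by (auto simp: dotn_def)
  then show ?thesis
    unfolding ineq_system_def by (intro exI[of _ "\<lambda>_ _. 0"] exI[of _ E] exI[of _ "\<lambda>_. 0"]) simp
qed

lemma ineq_system_weighted_sum_le: "ineq_system n K 1 (\<lambda>x s. (\<Sum>k<K. w k * s k) \<le> b)"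
  unfolding ineq_system_def
  by (intro exI[of _ "\<lambda>_ _. 0"] exI[of _ "\<lambda>_. w"] exI[of _ "\<lambda>_. b"]) (simp add: dotn_def)

lemma lp_representable_possibilistic_constraint:
  assumes "ordered_possdist K \<pi>"
  shows "lp_representable n K (K + K + 1)
    (\<lambda>x. (SUP p\<in>Pposs K \<pi>. \<Sum>i<K. p i * dotn n (a i) x) \<le> b)"
proof -
  let ?R = "\<lambda>x s. ((\<forall>i<K. dotn n (a i) x \<le> s i) \<and> (\<forall>i. Suc i < K \<longrightarrow> s i \<le> s (Suc i))) \<and>
    (\<Sum>k<K. poss_weight K \<pi> k * s k) \<le> b"
  have "ineq_system n K (K + K + 1) ?R"
    by (intro ineq_system_conj ineq_system_majorant ineq_system_nondecreasing ineq_system_weighted_sum_le)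
  moreover have "(SUP p\<in>Pposs K \<pi>. \<Sum>i<K. p i * dotn n (a i) x) \<le> b \<longleftrightarrow> (\<exists>s. ?R x s)" for x
    by (simp add: SUP_Pposs_le_iff[OF assms] conj_assoc)
  ultimately show ?thesis
    unfolding lp_representable_def by blast
qed

theorem corollary1:
  shows "\<exists>C d :: nat. \<forall>(n::nat) (m::nat) (K::nat \<Rightarrow> nat) (\<pi>::nat \<Rightarrow> nat \<Rightarrow> real)
      (a::nat \<Rightarrow> nat \<Rightarrow> nat \<Rightarrow> real) (b::nat \<Rightarrow> real)
      (q::nat) (G::nat \<Rightarrow> nat \<Rightarrow> real) (h::nat \<Rightarrow> real).
    (\<forall>r<m. ordered_possdist (K r) (\<pi> r)) \<longrightarrow>
    (\<exists>(N::nat) (M::nat) (D::nat \<Rightarrow> nat \<Rightarrow> real) (E::nat \<Rightarrow> nat \<Rightarrow> real) (f::nat \<Rightarrow> real).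
       N + M \<le> C * (n + m + (\<Sum>r<m. K r) + q + 1) ^ d \<and>
       (\<forall>x::nat \<Rightarrow> real.
          ((\<forall>j<q. dotn n (G j) x \<le> h j) \<and>
           (\<forall>r<m. (SUP p\<in>Pposs (K r) (\<pi> r). \<Sum>i<K r. p i * dotn n (a r i) x) \<le> b r))
          \<longleftrightarrow>
          (\<exists>y::nat \<Rightarrow> real. \<forall>j<M. dotn n (D j) x + (\<Sum>k<N. E j k * y k) \<le> f j)))"
proof (rule exI[of _ 3], rule exI[of _ 1], intro allI impI)
  fix n m q :: nat and K :: "nat \<Rightarrow> nat" and \<pi> :: "nat \<Rightarrow> nat \<Rightarrow> real"
    and a :: "nat \<Rightarrow> nat \<Rightarrow> nat \<Rightarrow> real" and b h :: "nat \<Rightarrow> real" and G :: "nat \<Rightarrow> nat \<Rightarrow> real"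
  assume ordered: "\<forall>r<m. ordered_possdist (K r) (\<pi> r)"
  have size: "(\<Sum>r<m. K r + K r + 1) = 2 * (\<Sum>r<m. K r) + m"
    by (induction m) simp_all
  have "lp_representable n (\<Sum>r<m. K r) (\<Sum>r<m. K r + K r + 1)
      (\<lambda>x. \<forall>r<m. (SUP p\<in>Pposs (K r) (\<pi> r). \<Sum>i<K r. p i * dotn n (a r i) x) \<le> b r)"
    using ordered by (intro lp_representable_all allI impI lp_representable_possibilistic_constraint) simp
  with lp_representable_linear
  have "lp_representable n (0 + (\<Sum>r<m. K r)) (q + (\<Sum>r<m. K r + K r + 1))
      (\<lambda>x. (\<forall>j<q. dotn n (G j) x \<le> h j) \<and>
           (\<forall>r<m. (SUP p\<in>Pposs (K r) (\<pi> r). \<Sum>i<K r. p i * dotn n (a r i) x) \<le> b r))"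
    by (rule lp_representable_conj)
  moreover have "0 + (\<Sum>r<m. K r) + (q + (\<Sum>r<m. K r + K r + 1))
      \<le> 3 * (n + m + (\<Sum>r<m. K r) + q + 1) ^ 1"
    using size by simp
  ultimately show "\<exists>N M D E f. N + M \<le> 3 * (n + m + (\<Sum>r<m. K r) + q + 1) ^ 1 \<and>
       (\<forall>x. ((\<forall>j<q. dotn n (G j) x \<le> h j) \<and>
           (\<forall>r<m. (SUP p\<in>Pposs (K r) (\<pi> r). \<Sum>i<K r. p i * dotn n (a r i) x) \<le> b r))
          \<longleftrightarrow> (\<exists>y. \<forall>j<M. dotn n (D j) x + (\<Sum>k<N. E j k * y k) \<le> f j))"
    unfolding lp_representable_iff by blast
qed

end
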